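(* There exists a constant $\alpha>0$ such that the following holds for every $r=r(n)$ with $1\le r$ and $r=o(\log n)$. If $p=p(n)$ satisfies $p\,n^{\frac{2r+1}{2r}}\to\infty$ and $p\le\alpha\frac{\log n}{rn}$, then with high probability $G\in\mathcal G(n,p)$ has at least two connected components each of which is a path on exactly $2r+1$ vertices.
   Context: $\mathcal G(n,p)$ is the Erdős–Rényi random graph on vertex set $[n]$ in which each pair is an edge independently with probability $p$. "With high probability" means with probability tending to $1$ as $n\to\infty$. *)

theory Defs
  imports "HOL-Probability.Probability" "HOL-Library.Landau_Symbols"
begin

text \<open>A graph on vertex set {0..<n} is given by an edge indicator E on 2-element sets.\<close>

definition vpairs :: "nat \<Rightarrow> nat set set" where
  "vpairs n = {e. e \<subseteq> {..<n} \<and> card e = 2}"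

definition Gnp :: "nat \<Rightarrow> real \<Rightarrow> (nat set \<Rightarrow> bool) pmf" where
  "Gnp n p = Pi_pmf (vpairs n) False (\<lambda>_. bernoulli_pmf p)"

definition path_component :: "nat \<Rightarrow> (nat set \<Rightarrow> bool) \<Rightarrow> nat \<Rightarrow> nat set \<Rightarrow> bool" where
  "path_component n E k C \<longleftrightarrow> C \<subseteq> {..<n} \<and>
     (\<exists>vs. distinct vs \<and> set vs = C \<and> length vs = k \<and>
        (\<forall>u\<in>C. \<forall>w<n. u \<noteq> w \<longrightarrow>
           (E {u, w} \<longleftrightarrow> (\<exists>i. Suc i < length vs \<and> {u, w} = {vs ! i, vs ! Suc i}))))"

end

theory Submission
  imports Defs "HOL-Real_Asymp.Real_Asymp"
begin

text \<open>Second moment method. Let N count the lists of k = 2r+1 distinct vertices that enumerate, in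
  order, a component of G(n,p) which is a path. A component is enumerated by at most k lists
  overlapping it, so N > k yields two such components. Listings on disjoint vertex sets only share
  the at most k^2 non-edges between them, so Var N \<le> k \<mu> + \<mu>^2 ((1-p)^(-k^2) - 1) with
  \<mu> = E N, and Chebyshev bounds the failure probability by 4k/\<mu> + 8k^2 p once \<mu> \<ge> 2k.
  Here k^2 p \<rightarrow> 0, and \<mu>/k \<rightarrow> \<infinity> because \<mu> \<ge> (n-k)^k p^(k-1) (1-p)^(kn) with
  n^k p^(k-1) = x^(2r) for x = p n^((2r+1)/(2r)). Moreover (1-p)^(kn) \<ge> e^(-2knp), and either
  e^(-2knp) \<ge> x^(-r), or np > 1, in which case n^k p^(k-1) \<ge> n while e^(-2knp) \<ge> n^(-1/2)
  by the choice \<alpha> = 1/12.\<close>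

definition path_listing :: "nat \<Rightarrow> (nat set \<Rightarrow> bool) \<Rightarrow> nat list \<Rightarrow> bool" where
  "path_listing n E vs \<longleftrightarrow> (\<forall>u\<in>set vs. \<forall>w<n. u \<noteq> w \<longrightarrow>
      (E {u, w} \<longleftrightarrow> (\<exists>i. Suc i < length vs \<and> {u, w} = {vs ! i, vs ! Suc i})))"

definition incident_pairs :: "nat \<Rightarrow> nat set \<Rightarrow> nat set set" where
  "incident_pairs n V = {{u, w} | u w. u \<in> V \<and> w < n \<and> u \<noteq> w}"

definition path_edges :: "nat list \<Rightarrow> nat set set" where
  "path_edges vs = {{vs ! i, vs ! Suc i} | i. Suc i < length vs}"

lemma path_listing_iff:
  "path_listing n E vs \<longleftrightarrow>
    (\<forall>u\<in>set vs. \<forall>w<n. u \<noteq> w \<longrightarrow> (E {u, w} \<longleftrightarrow> {u, w} \<in> path_edges vs))"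
  unfolding path_listing_def path_edges_def by (simp add: conj_commute)

lemma path_listing_iff_pattern:
  "path_listing n E vs \<longleftrightarrow> (\<forall>e\<in>incident_pairs n (set vs). E e = (e \<in> path_edges vs))"
  unfolding path_listing_iff incident_pairs_def by blast

lemma path_component_if_path_listing:
  "path_listing n E vs \<Longrightarrow> distinct vs \<Longrightarrow> set vs \<subseteq> {..<n} \<Longrightarrow>
    path_component n E (length vs) (set vs)"
  unfolding path_listing_def path_component_def by blast

lemma path_edges_subset: "e \<in> path_edges vs \<Longrightarrow> e \<subseteq> set vs"
  unfolding path_edges_def by auto

lemma path_listing_closed:
  assumes "path_listing n E vs" "u \<in> set vs" "w < n" "u \<noteq> w" "E {u, w}"
  shows "w \<in> set vs"
proof -
  have "{u, w} \<in> path_edges vs" using assms unfolding path_listing_iff by blast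
  then show ?thesis using path_edges_subset by blast
qed

lemma path_listing_consecutive:
  assumes "path_listing n E vs" "distinct vs" "set vs \<subseteq> {..<n}" "Suc i < length vs"
  shows "E {vs ! i, vs ! Suc i}"
proof -
  have "vs ! i \<noteq> vs ! Suc i" using assms(2,4) by (simp add: nth_eq_iff_index_eq)
  moreover have "vs ! Suc i < n" using assms(3,4) nth_mem by blast
  moreover have "{vs ! i, vs ! Suc i} \<in> path_edges vs" using assms(4) unfolding path_edges_def by blast
  moreover have "vs ! i \<in> set vs" using assms(4) by simp
  ultimately show ?thesis using assms(1) unfolding path_listing_iff by blast
qed

lemma propagate_along_indices:
  assumes "\<And>i. Suc i < l \<Longrightarrow> P i \<longleftrightarrow> P (Suc i)" "m < l" "P m" "j < l"
  shows "P j"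
proof -
  have "i < l \<Longrightarrow> P i \<longleftrightarrow> P 0" for i
    by (induction i) (use assms(1) in auto)
  then show ?thesis using assms(2-4) by blast
qed

lemma path_listing_overlap_subset:
  assumes "path_listing n E vs" "path_listing n E vs'" "distinct vs'" "set vs' \<subseteq> {..<n}"
    and "set vs \<inter> set vs' \<noteq> {}"
  shows "set vs' \<subseteq> set vs"
proof
  obtain x where x: "x \<in> set vs" "x \<in> set vs'" using assms(5) by blast
  then obtain m where "m < length vs'" "vs' ! m = x" by (auto simp: in_set_conv_nth)
  with x have m: "m < length vs'" "vs' ! m \<in> set vs" by simp_all
  have step: "vs' ! i \<in> set vs \<longleftrightarrow> vs' ! Suc i \<in> set vs" if i: "Suc i < length vs'" for i
  proof -
    have edge: "E {vs' ! i, vs' ! Suc i}" "E {vs' ! Suc i, vs' ! i}"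
      using path_listing_consecutive[OF assms(2-4) i] by (simp_all add: insert_commute)
    have "vs' ! i \<noteq> vs' ! Suc i" "vs' ! Suc i \<noteq> vs' ! i"
      using assms(3) i by (simp_all add: nth_eq_iff_index_eq)
    moreover have "vs' ! i < n" "vs' ! Suc i < n" using assms(4) i nth_mem Suc_lessD by blast+
    ultimately show ?thesis
      using path_listing_closed[OF assms(1) _ _ _ edge(1)] path_listing_closed[OF assms(1) _ _ _ edge(2)]
      by blast
  qed
  fix x assume "x \<in> set vs'"
  then obtain j where "j < length vs'" "x = vs' ! j" by (auto simp: in_set_conv_nth)
  then show "x \<in> set vs"
    using propagate_along_indices[where P = "\<lambda>i. vs' ! i \<in> set vs", OF step m] by blast
qed

lemma path_edges_nth_iff:
  assumes "distinct vs" "i < length vs"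
  shows "{vs ! i, w} \<in> path_edges vs \<longleftrightarrow>
    (Suc i < length vs \<and> w = vs ! Suc i) \<or> (0 < i \<and> w = vs ! (i - 1))"
proof
  assume "{vs ! i, w} \<in> path_edges vs"
  then obtain l where l: "Suc l < length vs" "{vs ! i, w} = {vs ! l, vs ! Suc l}"
    unfolding path_edges_def by blast
  then consider "vs ! i = vs ! l" "w = vs ! Suc l" | "vs ! i = vs ! Suc l" "w = vs ! l"
    by (auto simp: doubleton_eq_iff)
  then show "(Suc i < length vs \<and> w = vs ! Suc i) \<or> (0 < i \<and> w = vs ! (i - 1))"
  proof cases
    case 1
    then have "i = l" using assms l(1) by (simp add: nth_eq_iff_index_eq)
    then show ?thesis using 1 l(1) by simp
  next
    case 2
    then have "i = Suc l" using assms l(1) by (simp add: nth_eq_iff_index_eq)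
    then show ?thesis using 2 by simp
  qed
next
  assume "(Suc i < length vs \<and> w = vs ! Suc i) \<or> (0 < i \<and> w = vs ! (i - 1))"
  then show "{vs ! i, w} \<in> path_edges vs"
  proof
    assume "Suc i < length vs \<and> w = vs ! Suc i"
    then show ?thesis unfolding path_edges_def by blast
  next
    assume i: "0 < i \<and> w = vs ! (i - 1)"
    then have "{vs ! i, w} = {vs ! (i - 1), vs ! Suc (i - 1)}" by (simp add: insert_commute)
    moreover have "Suc (i - 1) < length vs" using i assms(2) by simp
    ultimately show ?thesis unfolding path_edges_def by blast
  qed
qed

lemma path_listing_unique:
  assumes "path_listing n E vs" "path_listing n E vs'" "distinct vs" "distinct vs'"
    and "set vs \<subseteq> {..<n}" "length vs = length vs'" "vs ! 0 = vs' ! 0"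
  shows "vs = vs'"
proof (rule nth_equalityI)
  show "length vs = length vs'" by fact
  fix i assume "i < length vs"
  then show "vs ! i = vs' ! i"
  proof (induction i rule: less_induct)
    case (less i)
    show ?case
    proof (cases i)
      case 0
      then show ?thesis using assms(7) by simp
    next
      case (Suc j)
      have j: "j < i" "Suc j < length vs" "j < length vs'"
        using less.prems Suc assms(6) by simp_all
      have same: "vs ! j = vs' ! j" using less.IH[OF j(1)] j(2) by simp
      have "E {vs ! j, vs ! i}" using path_listing_consecutive[OF assms(1,3,5) j(2)] Suc by simp
      moreover have "vs ! j \<noteq> vs ! i" using assms(3) less.prems j by (simp add: nth_eq_iff_index_eq)
      moreover have "vs ! i < n" using assms(5) less.prems nth_mem by blast
      moreover have "vs' ! j \<in> set vs'" using j by simp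
      ultimately have "{vs' ! j, vs ! i} \<in> path_edges vs'"
        using assms(2) same unfolding path_listing_iff by metis
      then have "(Suc j < length vs' \<and> vs ! i = vs' ! Suc j) \<or> (0 < j \<and> vs ! i = vs' ! (j - 1))"
        using path_edges_nth_iff[OF assms(4) j(3)] by blast
      moreover have "vs' ! (j - 1) = vs ! (j - 1)" if "0 < j"
        using less.IH[of "j - 1"] that j by simp
      moreover have "vs ! i \<noteq> vs ! (j - 1)"
        using assms(3) less.prems j by (simp add: nth_eq_iff_index_eq)
      ultimately show ?thesis using Suc by auto
    qed
  qed
qed

lemma finite_vpairs: "finite (vpairs n)"
  by (rule finite_subset[of _ "Pow {..<n}"]) (auto simp: vpairs_def)

lemma finite_set_pmf_Gnp: "finite (set_pmf (Gnp n p))"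
  unfolding Gnp_def by (auto simp: set_Pi_pmf finite_vpairs)

lemma integrable_Gnp [simp]: "integrable (measure_pmf (Gnp n p)) (f :: (nat set \<Rightarrow> bool) \<Rightarrow> real)"
  by (rule integrable_measure_pmf_finite[OF finite_set_pmf_Gnp])

lemma prob_Gnp_prescribed:
  assumes "J \<subseteq> vpairs n" "0 \<le> p" "p \<le> 1"
  shows "measure_pmf.prob (Gnp n p) {E. \<forall>e\<in>J. E e = g e} = (\<Prod>e\<in>J. if g e then p else 1 - p)"
proof -
  define B where "B e = (if e \<in> J then {g e} else UNIV)" for e
  have "{E. \<forall>e\<in>J. E e = g e} = Pi (vpairs n) B"
    using assms(1) by (auto simp: B_def Pi_def)
  then have "measure_pmf.prob (Gnp n p) {E. \<forall>e\<in>J. E e = g e}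
      = (\<Prod>e\<in>vpairs n. measure_pmf.prob (bernoulli_pmf p) (B e))"
    unfolding Gnp_def by (simp add: measure_Pi_pmf_Pi finite_vpairs)
  also have "\<dots> = (\<Prod>e\<in>vpairs n. if e \<in> J then (if g e then p else 1 - p) else 1)"
    using assms(2,3) by (intro prod.cong) (auto simp: B_def measure_pmf_single)
  also have "\<dots> = (\<Prod>e\<in>J. if g e then p else 1 - p)"
    using assms(1) by (simp add: prod.If_cases finite_vpairs Int_absorb1)
  finally show ?thesis .
qed

lemma prob_Gnp_prescribed_inter:
  assumes "J \<subseteq> vpairs n" "J' \<subseteq> vpairs n" "0 \<le> p" "p \<le> 1" "\<forall>e\<in>J \<inter> J'. \<not> g e"
  shows "measure_pmf.prob (Gnp n p) ({E. \<forall>e\<in>J. E e = g e} \<inter> {E. \<forall>e\<in>J'. E e = g e}) * (1 - p) ^ card (J \<inter> J')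
       = measure_pmf.prob (Gnp n p) {E. \<forall>e\<in>J. E e = g e} * measure_pmf.prob (Gnp n p) {E. \<forall>e\<in>J'. E e = g e}"
proof -
  define w where "w e = (if g e then p else 1 - p)" for e
  have fin: "finite J" "finite J'" using assms(1,2) finite_vpairs finite_subset by blast+
  have "{E. \<forall>e\<in>J. E e = g e} \<inter> {E. \<forall>e\<in>J'. E e = g e} = {E. \<forall>e\<in>J \<union> J'. E e = g e}" by blast
  moreover have "prod w (J \<inter> J') = (1 - p) ^ card (J \<inter> J')"
    using assms(5) by (simp add: w_def)
  ultimately show ?thesis
    using prod.union_inter[OF fin, of w] assms(1-4)
    by (simp add: prob_Gnp_prescribed w_def)
qed

lemma incident_pairs_subset_vpairs: "V \<subseteq> {..<n} \<Longrightarrow> incident_pairs n V \<subseteq> vpairs n"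
  unfolding incident_pairs_def vpairs_def by (auto simp: card_insert_if)

lemma card_incident_pairs_le:
  assumes "finite V"
  shows "card (incident_pairs n V) \<le> card V * n"
proof -
  have "incident_pairs n V \<subseteq> (\<lambda>(u, w). {u, w}) ` (V \<times> {..<n})"
    unfolding incident_pairs_def by auto
  then have "card (incident_pairs n V) \<le> card ((\<lambda>(u, w). {u, w}) ` (V \<times> {..<n}))"
    using assms by (intro card_mono) auto
  also have "\<dots> \<le> card (V \<times> {..<n})" by (rule card_image_le) (use assms in simp)
  finally show ?thesis by (simp add: card_cartesian_product)
qed

lemma card_incident_pairs_inter_le:
  assumes "finite V" "finite W" "V \<inter> W = {}"
  shows "card (incident_pairs n V \<inter> incident_pairs n W) \<le> card V * card W"
proof -
  have "incident_pairs n V \<inter> incident_pairs n W \<subseteq> (\<lambda>(u, w). {u, w}) ` (V \<times> W)"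
    using assms(3) unfolding incident_pairs_def by (auto simp: doubleton_eq_iff)
  then have "card (incident_pairs n V \<inter> incident_pairs n W) \<le> card ((\<lambda>(u, w). {u, w}) ` (V \<times> W))"
    using assms(1,2) by (intro card_mono) auto
  also have "\<dots> \<le> card (V \<times> W)" by (rule card_image_le) (use assms in simp)
  finally show ?thesis by (simp add: card_cartesian_product)
qed

lemma path_edges_eq_image: "path_edges vs = (\<lambda>i. {vs ! i, vs ! Suc i}) ` {..<length vs - 1}"
  unfolding path_edges_def by auto

lemma finite_path_edges: "finite (path_edges vs)"
  unfolding path_edges_eq_image by simp

lemma card_path_edges_le: "card (path_edges vs) \<le> length vs - 1"
  unfolding path_edges_eq_image using card_image_le[of "{..<length vs - 1}"] by simp

lemma incident_pairs_inter_path_edges: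
  "V \<inter> set vs = {} \<Longrightarrow> incident_pairs n V \<inter> path_edges vs = {}"
  unfolding incident_pairs_def using path_edges_subset by fastforce

lemma prob_path_listing:
  assumes "set vs \<subseteq> {..<n}" "0 \<le> p" "p \<le> 1"
  shows "measure_pmf.prob (Gnp n p) {E. path_listing n E vs}
    = (\<Prod>e\<in>incident_pairs n (set vs). if e \<in> path_edges vs then p else 1 - p)"
  unfolding path_listing_iff_pattern
  by (rule prob_Gnp_prescribed[OF incident_pairs_subset_vpairs[OF assms(1)] assms(2,3)])

lemma prob_path_listing_ge:
  assumes "set vs \<subseteq> {..<n}" "0 \<le> p" "p \<le> 1"
  shows "p ^ (length vs - 1) * (1 - p) ^ (length vs * n) \<le> measure_pmf.prob (Gnp n p) {E. path_listing n E vs}"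
proof -
  let ?J = "incident_pairs n (set vs)" and ?P = "path_edges vs"
  have fin: "finite ?J" using incident_pairs_subset_vpairs[OF assms(1)] finite_vpairs finite_subset by blast
  have "card (?J \<inter> ?P) \<le> length vs - 1"
    using card_path_edges_le[of vs] card_mono[OF finite_path_edges Int_lower2, of ?J vs] by linarith
  moreover have "card (?J - ?P) \<le> length vs * n"
    using card_mono[OF fin, of "?J - ?P"] card_incident_pairs_le[of "set vs" n] card_length[of vs]
    by (meson Diff_subset le_trans mult_le_mono1 finite_set)
  ultimately have "p ^ (length vs - 1) * (1 - p) ^ (length vs * n) \<le> p ^ card (?J \<inter> ?P) * (1 - p) ^ card (?J - ?P)"
    using assms(2,3) by (intro mult_mono power_decreasing) auto
  also have "\<dots> = measure_pmf.prob (Gnp n p) {E. path_listing n E vs}"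
    using assms by (simp add: prob_path_listing prod.If_cases[OF fin] Diff_eq)
  finally show ?thesis .
qed

text \<open>Listings on disjoint vertex sets interact only through the at most k^2 non-edges between them.\<close>
lemma prob_path_listing_inter_le:
  assumes "set vs \<subseteq> {..<n}" "set vs' \<subseteq> {..<n}" "set vs \<inter> set vs' = {}"
    and "length vs = k" "length vs' = k" "0 \<le> p" "p < 1"
  shows "measure_pmf.prob (Gnp n p) ({E. path_listing n E vs} \<inter> {E. path_listing n E vs'})
    \<le> measure_pmf.prob (Gnp n p) {E. path_listing n E vs}
      * measure_pmf.prob (Gnp n p) {E. path_listing n E vs'} / (1 - p) ^ (k * k)"
proof -
  let ?J = "incident_pairs n (set vs)" and ?J' = "incident_pairs n (set vs')"
  define g where "g e \<longleftrightarrow> e \<in> path_edges vs \<union> path_edges vs'" for e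
  have disj: "?J \<inter> path_edges vs' = {}" "?J' \<inter> path_edges vs = {}"
    using assms(3) by (auto intro!: incident_pairs_inter_path_edges)
  have A: "{E. path_listing n E vs} = {E. \<forall>e\<in>?J. E e = g e}"
    "{E. path_listing n E vs'} = {E. \<forall>e\<in>?J'. E e = g e}"
    unfolding path_listing_iff_pattern g_def using disj by blast+
  have "card (set vs) * card (set vs') \<le> k * k"
    using card_length[of vs] card_length[of vs'] assms(4,5) by (intro mult_le_mono) auto
  then have "card (?J \<inter> ?J') \<le> k * k"
    using card_incident_pairs_inter_le[OF finite_set finite_set assms(3), of n] by linarith
  then have "(1 - p) ^ (k * k) \<le> (1 - p) ^ card (?J \<inter> ?J')"
    using assms(6,7) by (intro power_decreasing) auto
  then have "measure_pmf.prob (Gnp n p) ({E. path_listing n E vs} \<inter> {E. path_listing n E vs'}) * (1 - p) ^ (k * k)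
    \<le> measure_pmf.prob (Gnp n p) {E. path_listing n E vs} * measure_pmf.prob (Gnp n p) {E. path_listing n E vs'}"
    unfolding A using assms incident_pairs_subset_vpairs disj
    by (subst prob_Gnp_prescribed_inter[symmetric]) (auto intro: mult_left_mono simp: g_def)
  then show ?thesis using assms(6,7) by (simp add: pos_le_divide_eq)
qed

definition distinct_lists :: "nat \<Rightarrow> nat \<Rightarrow> nat list set" where
  "distinct_lists n k = {vs. length vs = k \<and> distinct vs \<and> set vs \<subseteq> {..<n}}"

definition path_count :: "nat \<Rightarrow> nat \<Rightarrow> (nat set \<Rightarrow> bool) \<Rightarrow> real" where
  "path_count n k E = (\<Sum>vs\<in>distinct_lists n k. indicator {E. path_listing n E vs} E)"

lemma finite_distinct_lists: "finite (distinct_lists n k)"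
proof (rule finite_subset)
  show "distinct_lists n k \<subseteq> {vs. set vs \<subseteq> {..<n} \<and> length vs = k}"
    unfolding distinct_lists_def by auto
qed (rule finite_lists_length_eq[OF finite_lessThan])

lemma card_distinct_lists_ge:
  assumes "k \<le> n"
  shows "real (n - k) ^ k \<le> real (card (distinct_lists n k))"
proof -
  have "real (n - k) ^ k = (\<Prod>i\<in>{n - k + 1 .. n}. real (n - k))"
    using assms by simp
  also have "\<dots> \<le> (\<Prod>i\<in>{n - k + 1 .. n}. real i)"
    by (rule prod_mono) auto
  also have "\<dots> = real (card (distinct_lists n k))"
    using card_lists_distinct_length_eq[of "{..<n}" k] assms
    by (simp add: distinct_lists_def)
  finally show ?thesis .
qed

lemma path_count_eq_card:
  "path_count n k E = real (card {vs \<in> distinct_lists n k. path_listing n E vs})"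
  unfolding path_count_def indicator_def
  using finite_distinct_lists by (simp add: Int_def)

text \<open>Overlapping listings have the same vertex set and are told apart by their first vertex.\<close>
lemma card_overlapping_path_listings_le:
  assumes vs: "vs \<in> distinct_lists n k" and "path_listing n E vs"
  shows "card {vs' \<in> distinct_lists n k. path_listing n E vs' \<and> set vs \<inter> set vs' \<noteq> {}} \<le> k"
proof -
  let ?S = "{vs' \<in> distinct_lists n k. path_listing n E vs' \<and> set vs \<inter> set vs' \<noteq> {}}"
  have inj: "inj_on hd ?S"
  proof (rule inj_onI)
    fix xs ys assume xs: "xs \<in> ?S" and ys: "ys \<in> ?S" and "hd xs = hd ys"
    moreover have "xs \<noteq> []" "ys \<noteq> []" using xs ys by auto
    ultimately have "xs ! 0 = ys ! 0" by (simp add: hd_conv_nth)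
    then show "xs = ys"
      using path_listing_unique[of n E xs ys] xs ys by (auto simp: distinct_lists_def)
  qed
  have sub: "hd ` ?S \<subseteq> set vs"
  proof
    fix v assume "v \<in> hd ` ?S"
    then obtain vs' where vs': "vs' \<in> ?S" "v = hd vs'" by blast
    then have "set vs' \<subseteq> set vs"
      using path_listing_overlap_subset[OF assms(2), of vs'] by (auto simp: distinct_lists_def)
    moreover have "vs' \<noteq> []" using vs' by auto
    ultimately show "v \<in> set vs" using vs'(2) by (auto dest: hd_in_set)
  qed
  have "card ?S = card (hd ` ?S)" using inj by (simp add: card_image)
  also have "\<dots> \<le> card (set vs)" by (rule card_mono[OF finite_set sub])
  also have "\<dots> = k" using vs by (simp add: distinct_lists_def distinct_card)
  finally show ?thesis .
qed

lemma two_path_components_if_path_count_gt: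
  assumes "1 \<le> k" "real k < path_count n k E"
  shows "\<exists>C1 C2. C1 \<noteq> C2 \<and> path_component n E k C1 \<and> path_component n E k C2"
proof -
  let ?T = "{vs \<in> distinct_lists n k. path_listing n E vs}"
  have "k < card ?T" using assms(2) unfolding path_count_eq_card by simp
  then obtain vs where vs: "vs \<in> distinct_lists n k" "path_listing n E vs"
    by (metis (no_types, lifting) card.empty empty_Collect_eq not_less0)
  let ?O = "{vs' \<in> distinct_lists n k. path_listing n E vs' \<and> set vs \<inter> set vs' \<noteq> {}}"
  have "\<not> ?T \<subseteq> ?O"
  proof
    assume "?T \<subseteq> ?O"
    then have "card ?T \<le> card ?O" by (intro card_mono) (auto intro: finite_subset[OF _ finite_distinct_lists])
    then show False using \<open>k < card ?T\<close> card_overlapping_path_listings_le[OF vs] by simp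
  qed
  then obtain vs' where vs': "vs' \<in> distinct_lists n k" "path_listing n E vs'" "set vs \<inter> set vs' = {}"
    by blast
  have "set vs \<noteq> set vs'" using vs(1) vs'(3) assms(1) by (auto simp: distinct_lists_def)
  moreover have "path_component n E k (set vs)"
    using path_component_if_path_listing[OF vs(2)] vs(1) by (auto simp: distinct_lists_def)
  moreover have "path_component n E k (set vs')"
    using path_component_if_path_listing[OF vs'(2)] vs'(1) by (auto simp: distinct_lists_def)
  ultimately show ?thesis by blast
qed

lemma overlapping_indicator_sum_le:
  assumes "vs \<in> distinct_lists n k"
  shows "(\<Sum>vs'\<in>{vs' \<in> distinct_lists n k. set vs \<inter> set vs' \<noteq> {}}.
            indicator ({E. path_listing n E vs} \<inter> {E. path_listing n E vs'}) E)
         \<le> real k * indicator {E. path_listing n E vs} E"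
proof (cases "path_listing n E vs")
  case True
  let ?O = "{vs' \<in> distinct_lists n k. set vs \<inter> set vs' \<noteq> {}}"
  have "(\<Sum>vs'\<in>?O. indicator ({E. path_listing n E vs} \<inter> {E. path_listing n E vs'}) E)
      = real (card {vs' \<in> ?O. path_listing n E vs'})"
    using True finite_distinct_lists by (simp add: indicator_def Int_def)
  also have "{vs' \<in> ?O. path_listing n E vs'}
      = {vs' \<in> distinct_lists n k. path_listing n E vs' \<and> set vs \<inter> set vs' \<noteq> {}}" by blast
  finally show ?thesis using card_overlapping_path_listings_le[OF assms True] True by simp
qed simp

lemma expectation_path_count:
  "measure_pmf.expectation (Gnp n p) (path_count n k)
    = (\<Sum>vs\<in>distinct_lists n k. measure_pmf.prob (Gnp n p) {E. path_listing n E vs})"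
  unfolding path_count_def by simp

lemma expectation_path_count_sq:
  "measure_pmf.expectation (Gnp n p) (\<lambda>E. (path_count n k E)\<^sup>2)
    = (\<Sum>vs\<in>distinct_lists n k. \<Sum>vs'\<in>distinct_lists n k.
         measure_pmf.prob (Gnp n p) ({E. path_listing n E vs} \<inter> {E. path_listing n E vs'}))"
  unfolding path_count_def power2_eq_square sum_product indicator_inter_arith[symmetric] by simp

lemma sum_prob_overlapping_path_listings_le:
  assumes "vs \<in> distinct_lists n k"
  shows "(\<Sum>vs'\<in>{vs' \<in> distinct_lists n k. set vs \<inter> set vs' \<noteq> {}}.
      measure_pmf.prob (Gnp n p) ({E. path_listing n E vs} \<inter> {E. path_listing n E vs'}))
    \<le> real k * measure_pmf.prob (Gnp n p) {E. path_listing n E vs}"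
proof -
  let ?O = "{vs' \<in> distinct_lists n k. set vs \<inter> set vs' \<noteq> {}}"
  have "(\<Sum>vs'\<in>?O. measure_pmf.prob (Gnp n p) ({E. path_listing n E vs} \<inter> {E. path_listing n E vs'}))
      = measure_pmf.expectation (Gnp n p)
          (\<lambda>E. \<Sum>vs'\<in>?O. indicator ({E. path_listing n E vs} \<inter> {E. path_listing n E vs'}) E)"
    by simp
  also have "\<dots> \<le> measure_pmf.expectation (Gnp n p) (\<lambda>E. real k * indicator {E. path_listing n E vs} E)"
    by (intro integral_mono) (use overlapping_indicator_sum_le[OF assms] in auto)
  also have "\<dots> = real k * measure_pmf.prob (Gnp n p) {E. path_listing n E vs}" by simp
  finally show ?thesis .
qed

lemma sum_prob_disjoint_path_listings_le:
  assumes "vs \<in> distinct_lists n k" "0 \<le> p" "p < 1"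
  shows "(\<Sum>vs'\<in>{vs' \<in> distinct_lists n k. set vs \<inter> set vs' = {}}.
      measure_pmf.prob (Gnp n p) ({E. path_listing n E vs} \<inter> {E. path_listing n E vs'}))
    \<le> measure_pmf.prob (Gnp n p) {E. path_listing n E vs}
      * measure_pmf.expectation (Gnp n p) (path_count n k) / (1 - p) ^ (k * k)"
proof -
  let ?P = "\<lambda>vs. measure_pmf.prob (Gnp n p) {E. path_listing n E vs}"
  have "(\<Sum>vs'\<in>{vs' \<in> distinct_lists n k. set vs \<inter> set vs' = {}}.
      measure_pmf.prob (Gnp n p) ({E. path_listing n E vs} \<inter> {E. path_listing n E vs'}))
    \<le> (\<Sum>vs'\<in>{vs' \<in> distinct_lists n k. set vs \<inter> set vs' = {}}. ?P vs * ?P vs' / (1 - p) ^ (k * k))"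
    using assms by (intro sum_mono prob_path_listing_inter_le) (auto simp: distinct_lists_def)
  also have "\<dots> \<le> (\<Sum>vs'\<in>distinct_lists n k. ?P vs * ?P vs' / (1 - p) ^ (k * k))"
    using assms(3) by (intro sum_mono2 finite_distinct_lists) auto
  also have "\<dots> = ?P vs * measure_pmf.expectation (Gnp n p) (path_count n k) / (1 - p) ^ (k * k)"
    unfolding expectation_path_count by (simp add: sum_divide_distrib sum_distrib_left)
  finally show ?thesis .
qed

lemma expectation_path_count_sq_le:
  fixes n k :: nat and p :: real
  assumes "0 \<le> p" "p < 1"
  defines "\<mu> \<equiv> measure_pmf.expectation (Gnp n p) (path_count n k)"
  shows "measure_pmf.expectation (Gnp n p) (\<lambda>E. (path_count n k E)\<^sup>2)
    \<le> real k * \<mu> + \<mu>\<^sup>2 / (1 - p) ^ (k * k)"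
proof -
  let ?L = "distinct_lists n k"
  let ?P = "\<lambda>X. measure_pmf.prob (Gnp n p) X"
  let ?A = "\<lambda>vs. {E. path_listing n E vs}"
  have "(\<Sum>vs'\<in>?L. ?P (?A vs \<inter> ?A vs')) \<le> real k * ?P (?A vs) + ?P (?A vs) * \<mu> / (1 - p) ^ (k * k)"
    if vs: "vs \<in> ?L" for vs
  proof -
    have "?L = {vs' \<in> ?L. set vs \<inter> set vs' \<noteq> {}} \<union> {vs' \<in> ?L. set vs \<inter> set vs' = {}}" by blast
    then have "(\<Sum>vs'\<in>?L. ?P (?A vs \<inter> ?A vs'))
        = (\<Sum>vs'\<in>{vs' \<in> ?L. set vs \<inter> set vs' \<noteq> {}}. ?P (?A vs \<inter> ?A vs'))
          + (\<Sum>vs'\<in>{vs' \<in> ?L. set vs \<inter> set vs' = {}}. ?P (?A vs \<inter> ?A vs'))"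
      using finite_distinct_lists by (subst sum.union_disjoint[symmetric]) auto
    then show ?thesis
      using sum_prob_overlapping_path_listings_le[OF vs, of p]
        sum_prob_disjoint_path_listings_le[OF vs assms(1,2)] unfolding \<mu>_def by linarith
  qed
  then have "measure_pmf.expectation (Gnp n p) (\<lambda>E. (path_count n k E)\<^sup>2)
      \<le> (\<Sum>vs\<in>?L. real k * ?P (?A vs) + ?P (?A vs) * \<mu> / (1 - p) ^ (k * k))"
    unfolding expectation_path_count_sq by (intro sum_mono)
  also have "\<dots> = real k * (\<Sum>vs\<in>?L. ?P (?A vs)) + (\<Sum>vs\<in>?L. ?P (?A vs)) * \<mu> / (1 - p) ^ (k * k)"
    by (simp add: sum.distrib sum_distrib_left sum_distrib_right sum_divide_distrib)
  also have "\<dots> = real k * \<mu> + \<mu>\<^sup>2 / (1 - p) ^ (k * k)"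
    unfolding \<mu>_def expectation_path_count by (simp add: power2_eq_square)
  finally show ?thesis .
qed

lemma prob_two_path_components_chebyshev:
  fixes n k :: nat and p :: real
  assumes "1 \<le> k" "0 \<le> p" "p < 1"
  defines "\<mu> \<equiv> measure_pmf.expectation (Gnp n p) (path_count n k)"
  assumes "real k < \<mu>"
  shows "1 - measure_pmf.prob (Gnp n p)
      {E. \<exists>C1 C2. C1 \<noteq> C2 \<and> path_component n E k C1 \<and> path_component n E k C2}
    \<le> (real k * \<mu> + \<mu>\<^sup>2 * (1 / (1 - p) ^ (k * k) - 1)) / (\<mu> - real k)\<^sup>2"
proof -
  let ?M = "measure_pmf (Gnp n p)" and ?N = "path_count n k"
  let ?G = "{E. \<exists>C1 C2. C1 \<noteq> C2 \<and> path_component n E k C1 \<and> path_component n E k C2}"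
  have "- ?G \<subseteq> {E \<in> space ?M. \<mu> - real k \<le> \<bar>?N E - \<mu>\<bar>}"
  proof
    fix E assume "E \<in> - ?G"
    then have "?N E \<le> real k" using two_path_components_if_path_count_gt[OF assms(1)] by force
    then show "E \<in> {E \<in> space ?M. \<mu> - real k \<le> \<bar>?N E - \<mu>\<bar>}" by simp
  qed
  then have "measure_pmf.prob (Gnp n p) (- ?G)
      \<le> measure_pmf.prob (Gnp n p) {E \<in> space ?M. \<mu> - real k \<le> \<bar>?N E - \<mu>\<bar>}"
    by (rule measure_pmf.finite_measure_mono) simp
  moreover have "measure_pmf.prob (Gnp n p) (- ?G) = 1 - measure_pmf.prob (Gnp n p) ?G"
    using measure_pmf.prob_compl[of ?G "Gnp n p"] by (simp add: Compl_eq_Diff_UNIV)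
  ultimately have "1 - measure_pmf.prob (Gnp n p) ?G
      \<le> measure_pmf.prob (Gnp n p) {E \<in> space ?M. \<mu> - real k \<le> \<bar>?N E - \<mu>\<bar>}" by simp
  also have "\<dots> \<le> measure_pmf.variance (Gnp n p) ?N / (\<mu> - real k)\<^sup>2"
    unfolding \<mu>_def using assms(5) by (intro measure_pmf.Chebyshev_inequality) (auto simp: \<mu>_def)
  also have "measure_pmf.variance (Gnp n p) ?N = measure_pmf.expectation (Gnp n p) (\<lambda>E. (?N E)\<^sup>2) - \<mu>\<^sup>2"
    unfolding \<mu>_def by (rule measure_pmf.variance_eq) simp_all
  also have "\<dots> \<le> real k * \<mu> + \<mu>\<^sup>2 * (1 / (1 - p) ^ (k * k) - 1)"
    using expectation_path_count_sq_le[OF assms(2,3), of n k] by (simp add: \<mu>_def algebra_simps)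
  finally show ?thesis using assms(5) by (simp add: divide_right_mono)
qed

lemma inverse_power_one_minus_bounds:
  fixes p :: real
  assumes "0 \<le> p" "p < 1" "real m * p \<le> 1 / 2"
  shows "0 \<le> 1 / (1 - p) ^ m - 1" "1 / (1 - p) ^ m - 1 \<le> 2 * (real m * p)"
proof -
  let ?c = "(1 - p) ^ m"
  have "1 - real m * p \<le> ?c"
    using Bernoulli_inequality[of "- p" m] assms(2) by simp
  then have c: "1 / 2 \<le> ?c" "1 - ?c \<le> real m * p" "?c \<le> 1"
    using assms by (simp_all add: power_le_one)
  then show "0 \<le> 1 / ?c - 1" by simp
  have "1 / ?c - 1 = (1 - ?c) / ?c" using assms(2) by (simp add: diff_divide_distrib)
  also have "\<dots> \<le> (1 - ?c) / (1 / 2)" using c by (intro divide_left_mono) auto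
  finally show "1 / ?c - 1 \<le> 2 * (real m * p)" using c(2) by simp
qed

lemma prob_two_path_components_ge:
  fixes n k :: nat and p :: real
  assumes "1 \<le> k" "0 \<le> p" "real (k * k) * p \<le> 1 / 2"
  defines "\<mu> \<equiv> measure_pmf.expectation (Gnp n p) (path_count n k)"
  assumes "2 * real k \<le> \<mu>"
  shows "1 - measure_pmf.prob (Gnp n p)
      {E. \<exists>C1 C2. C1 \<noteq> C2 \<and> path_component n E k C1 \<and> path_component n E k C2}
    \<le> 4 * real k / \<mu> + 8 * (real (k * k) * p)"
proof -
  let ?c = "(1 - p) ^ (k * k)"
  have "1 \<le> real k" using assms(1) by simp
  then have "1 * 1 \<le> real (k * k)" by (simp only: of_nat_mult) (intro mult_mono, auto)
  then have "1 * p \<le> real (k * k) * p" using assms(2) by (intro mult_right_mono) simp_all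
  then have p1: "p < 1" using assms(3) by linarith
  note inv = inverse_power_one_minus_bounds[OF assms(2) p1 assms(3)]
  have \<mu>: "0 < \<mu>" "real k < \<mu>" using assms(1,5) by simp_all
  have sq: "\<mu>\<^sup>2 / 4 \<le> (\<mu> - real k)\<^sup>2"
    using power_mono[of "\<mu> / 2" "\<mu> - real k" 2] assms(5) \<mu> by (simp add: power_divide)
  have "1 - measure_pmf.prob (Gnp n p)
      {E. \<exists>C1 C2. C1 \<noteq> C2 \<and> path_component n E k C1 \<and> path_component n E k C2}
    \<le> (real k * \<mu> + \<mu>\<^sup>2 * (1 / ?c - 1)) / (\<mu> - real k)\<^sup>2"
    unfolding \<mu>_def by (rule prob_two_path_components_chebyshev) (use assms(1,2) p1 \<mu> in \<open>simp_all add: \<mu>_def\<close>)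
  also have "\<dots> \<le> (real k * \<mu> + \<mu>\<^sup>2 * (1 / ?c - 1)) / (\<mu>\<^sup>2 / 4)"
    using \<mu> inv(1) by (intro divide_left_mono[OF sq]) simp_all
  also have "\<dots> = 4 * real k / \<mu> + 4 * (1 / ?c - 1)"
    using \<mu> by (simp add: field_simps power2_eq_square)
  also have "\<dots> \<le> 4 * real k / \<mu> + 8 * (real (k * k) * p)"
    using inv(2) by simp
  finally show ?thesis .
qed

lemma expected_path_count_ge:
  assumes "k \<le> n" "0 \<le> p" "p \<le> 1"
  shows "real (n - k) ^ k * p ^ (k - 1) * (1 - p) ^ (k * n)
    \<le> measure_pmf.expectation (Gnp n p) (path_count n k)"
proof -
  have "real (n - k) ^ k * p ^ (k - 1) * (1 - p) ^ (k * n)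
      \<le> real (card (distinct_lists n k)) * (p ^ (k - 1) * (1 - p) ^ (k * n))"
    unfolding mult.assoc using assms by (intro mult_right_mono card_distinct_lists_ge) auto
  also have "\<dots> = (\<Sum>vs\<in>distinct_lists n k. p ^ (k - 1) * (1 - p) ^ (k * n))" by simp
  also have "\<dots> \<le> measure_pmf.expectation (Gnp n p) (path_count n k)"
    unfolding expectation_path_count using assms(2,3) prob_path_listing_ge
    by (intro sum_mono) (auto simp: distinct_lists_def)
  finally show ?thesis .
qed

lemma ln_one_minus_ge:
  fixes y :: real
  assumes "0 \<le> y" "y \<le> 1 / 2"
  shows "- 2 * y \<le> ln (1 - y)"
proof -
  have "y * (2 * y) \<le> y * 1" using assms by (intro mult_left_mono) auto
  then show ?thesis using ln_one_minus_pos_lower_bound[OF assms] by (simp add: power2_eq_square)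
qed

lemma ln_first_moment_ge:
  fixes K N p :: real
  assumes K: "0 < K" "2 * K \<le> N" and p: "0 < p" "p \<le> 1 / 2"
  shows "K * ln N - 2 * K * K / N - 2 * K * N * p \<le> K * ln (N - K) + K * N * ln (1 - p)"
proof -
  have N: "0 < N" using K by simp
  have "N - K = N * (1 - K / N)" using N by (simp add: field_simps)
  moreover have "0 < 1 - K / N" using N K by (simp add: field_simps)
  ultimately have "ln (N - K) = ln N + ln (1 - K / N)" using N by (simp add: ln_mult)
  then have "ln N - 2 * (K / N) \<le> ln (N - K)"
    using ln_one_minus_ge[of "K / N"] N K by (simp add: field_simps)
  then have "K * (ln N - 2 * (K / N)) \<le> K * ln (N - K)" using K by (intro mult_left_mono) auto
  moreover have "K * N * (- 2 * p) \<le> K * N * ln (1 - p)"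
    using ln_one_minus_ge[of p] p K N by (intro mult_left_mono) auto
  ultimately show ?thesis by (simp add: algebra_simps)
qed

text \<open>The right-hand side is ln ((N - K)^K p^(K-1) (1-p)^(KN) / K), with R, N, K standing for r, n and
  k = 2r+1.\<close>
lemma path_count_exponent_ge:
  fixes R N p :: real
  defines "K \<equiv> 2 * R + 1"
  defines "x \<equiv> p * N powr (K / (2 * R))"
  assumes R: "1 \<le> R" and p: "0 < p" "p \<le> 1 / 2"
    and pR: "12 * p * R * N \<le> ln N" and RN: "R \<le> ln N" and KN: "2 * K \<le> N" and x: "6 \<le> ln x"
  shows "min (ln x - 3) (ln N / 2 - ln (3 * ln N)) - 18 * (ln N)\<^sup>2 / N
    \<le> K * ln (N - K) + 2 * R * ln p + K * N * ln (1 - p) - ln K"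
proof -
  have K: "3 \<le> K" "K \<le> 3 * R" using R by (simp_all add: K_def)
  have N: "0 < N" using KN K by simp
  have lnx: "2 * R * ln x = 2 * R * ln p + K * ln N"
    using R N p by (simp add: x_def ln_mult ln_powr field_simps)
  have main: "K * ln N + 2 * R * ln p - 2 * K * N * p - 2 * K * K / N
      \<le> K * ln (N - K) + 2 * R * ln p + K * N * ln (1 - p)"
    using ln_first_moment_ge[of K N p] K KN p by simp
  have "K * K \<le> (3 * ln N) * (3 * ln N)" using K RN by (intro mult_mono) auto
  then have KK: "2 * K * K / N \<le> 18 * (ln N)\<^sup>2 / N"
    using N by (intro divide_right_mono) (auto simp: power2_eq_square)
  have KNp: "2 * K * N * p \<le> 6 * R * (N * p)"
    using K N p mult_right_mono[OF K(2), of "2 * N * p"] by (simp add: algebra_simps)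
  also have "\<dots> = (12 * p * R * N) / 2" by simp
  finally have KNp_ln: "2 * K * N * p \<le> ln N / 2" using pR by linarith
  show ?thesis
  proof (cases "2 * K * N * p \<le> R * ln x")
    case True
    have "ln K \<le> K - 1" using K by (intro ln_le_minus_one) simp
    moreover have "1 * (ln x - 2) \<le> R * (ln x - 2)" using R x by (intro mult_right_mono) auto
    ultimately have "ln x - 3 - 2 * K * K / N
        \<le> K * ln (N - K) + 2 * R * ln p + K * N * ln (1 - p) - ln K"
      using main lnx True by (simp add: K_def algebra_simps)
    then show ?thesis using KK by linarith
  next
    case False
    moreover have "6 * R \<le> R * ln x" using x R by simp
    ultimately have "6 * R * 1 < 6 * R * (N * p)" using KNp by linarith
    then have "0 \<le> 2 * R * ln (N * p)" using R by simp
    then have "ln N \<le> K * ln N + 2 * R * ln p"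
      using N p by (simp add: K_def ln_mult algebra_simps)
    moreover have "ln K \<le> ln (3 * ln N)" using K RN by simp
    ultimately have "ln N / 2 - ln (3 * ln N) - 2 * K * K / N
        \<le> K * ln (N - K) + 2 * R * ln p + K * N * ln (1 - p) - ln K"
      using main KNp_ln by linarith
    then show ?thesis using KK by linarith
  qed
qed

lemma expected_path_count_ratio_ge:
  fixes n r :: nat and p :: real
  defines "k \<equiv> 2 * r + 1"
  defines "x \<equiv> p * real n powr ((2 * real r + 1) / (2 * real r))"
  assumes "1 \<le> r" "0 < p" "p \<le> 1 / 2" "12 * p * real r * real n \<le> ln (real n)"
    and "real r \<le> ln (real n)" "2 * k \<le> n" "6 \<le> ln x"
  shows "exp (min (ln x - 3) (ln (real n) / 2 - ln (3 * ln (real n))) - 18 * (ln (real n))\<^sup>2 / real n)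
    \<le> measure_pmf.expectation (Gnp n p) (path_count n k) / real k"
proof -
  define L where "L = real (n - k) ^ k * p ^ (k - 1) * (1 - p) ^ (k * n)"
  have k: "real k = 2 * real r + 1" "real (k - 1) = 2 * real r" "real (n - k) = real n - real k"
    using assms(8) by (simp_all add: k_def)
  have pos: "0 < real (n - k)" "0 < p" "0 < 1 - p" using assms(4,5,8) by (simp_all add: k_def)
  then have "0 < L" by (simp add: L_def)
  have "ln L = real k * ln (real n - real k) + 2 * real r * ln p + real k * real n * ln (1 - p)"
    using pos k by (simp add: L_def ln_mult ln_realpow)
  then have "ln (L / real k) = (2 * real r + 1) * ln (real n - (2 * real r + 1)) + 2 * real r * ln p
      + (2 * real r + 1) * real n * ln (1 - p) - ln (2 * real r + 1)"
    using \<open>0 < L\<close> by (simp add: ln_div k(1))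
  moreover have "2 * (2 * real r + 1) \<le> real n"
  proof -
    have "real (2 * k) \<le> real n" using assms(8) by (rule of_nat_mono)
    then show ?thesis by (simp add: k_def)
  qed
  ultimately have "min (ln x - 3) (ln (real n) / 2 - ln (3 * ln (real n))) - 18 * (ln (real n))\<^sup>2 / real n
      \<le> ln (L / real k)"
    using path_count_exponent_ge[of "real r" p "real n"] assms(3-7,9) by (simp add: x_def)
  then have "exp (min (ln x - 3) (ln (real n) / 2 - ln (3 * ln (real n))) - 18 * (ln (real n))\<^sup>2 / real n)
      \<le> L / real k"
    using \<open>0 < L\<close> ln_ge_iff[of "L / real k"] by (simp add: k_def)
  also have "\<dots> \<le> measure_pmf.expectation (Gnp n p) (path_count n k) / real k"
    using assms(4,5,8) unfolding L_def by (intro divide_right_mono expected_path_count_ge) auto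
  finally show ?thesis .
qed

lemma eventually_pos_if_mult_powr_at_top:
  fixes p e :: "nat \<Rightarrow> real"
  assumes "filterlim (\<lambda>n. p n * real n powr e n) at_top sequentially"
  shows "\<forall>\<^sub>F n in sequentially. 0 < p n"
proof -
  have "\<forall>\<^sub>F n in sequentially. 0 < p n * real n powr e n"
    using assms by (simp add: filterlim_at_top_dense)
  then show ?thesis
    by eventually_elim (auto simp: zero_less_mult_iff)
qed

lemma path_length_sq_mult_tendsto_0:
  fixes r :: "nat \<Rightarrow> nat" and p :: "nat \<Rightarrow> real"
  assumes "\<forall>n. 1 \<le> r n" "\<forall>\<^sub>F n in sequentially. real (r n) \<le> ln (real n)"
    and "\<forall>\<^sub>F n in sequentially. 0 \<le> p n"
    and "\<forall>\<^sub>F n in sequentially. 12 * p n * real (r n) * real n \<le> ln (real n)"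
  shows "(\<lambda>n. real ((2 * r n + 1) * (2 * r n + 1)) * p n) \<longlonglongrightarrow> 0"
proof (rule tendsto_sandwich[OF _ _ tendsto_const])
  show "(\<lambda>n. 3 / 4 * ((ln (real n))\<^sup>2 / real n)) \<longlonglongrightarrow> 0" by real_asymp
  show "\<forall>\<^sub>F n in sequentially. 0 \<le> real ((2 * r n + 1) * (2 * r n + 1)) * p n"
    using assms(3) by eventually_elim simp
  show "\<forall>\<^sub>F n in sequentially. real ((2 * r n + 1) * (2 * r n + 1)) * p n
      \<le> 3 / 4 * ((ln (real n))\<^sup>2 / real n)"
    using assms(2-4) eventually_gt_at_top[of 0]
  proof eventually_elim
    case (elim n)
    have "real (2 * r n + 1) \<le> 3 * real (r n)" using assms(1) by simp
    then have "real (2 * r n + 1) * real (2 * r n + 1) \<le> (3 * real (r n)) * (3 * real (r n))"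
      by (intro mult_mono) auto
    then have "real ((2 * r n + 1) * (2 * r n + 1)) * p n \<le> (3 * real (r n)) * (3 * real (r n)) * p n"
      using elim(2) unfolding of_nat_mult by (rule mult_right_mono)
    also have "\<dots> = 9 / 12 * real (r n) * (12 * p n * real (r n))" by simp
    also have "\<dots> \<le> 9 / 12 * ln (real n) * (ln (real n) / real n)"
      using elim by (intro mult_mono) (auto simp: field_simps)
    finally show ?case by (simp add: power2_eq_square)
  qed
qed

lemma first_moment_exponent_tendsto:
  fixes x :: "nat \<Rightarrow> real"
  assumes "filterlim (\<lambda>n. ln (x n)) at_top sequentially"
  shows "filterlim (\<lambda>n. min (ln (x n) - 3) (ln (real n) / 2 - ln (3 * ln (real n)))
    - 18 * (ln (real n))\<^sup>2 / real n) at_top sequentially"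
  unfolding filterlim_at_top
proof
  fix Z :: real
  have "\<forall>\<^sub>F n in sequentially. Z + 1 \<le> ln (real n) / 2 - ln (3 * ln (real n))" by real_asymp
  moreover have "\<forall>\<^sub>F n in sequentially. 18 * (ln (real n))\<^sup>2 / real n \<le> 1" by real_asymp
  moreover have "\<forall>\<^sub>F n in sequentially. Z + 4 \<le> ln (x n)" using assms by (simp add: filterlim_at_top)
  ultimately show "\<forall>\<^sub>F n in sequentially. Z \<le> min (ln (x n) - 3) (ln (real n) / 2 - ln (3 * ln (real n)))
    - 18 * (ln (real n))\<^sup>2 / real n"
    by eventually_elim auto
qed

lemma eventually_le_half_if_mult_le_ln:
  fixes r :: "nat \<Rightarrow> nat" and p :: "nat \<Rightarrow> real"
  assumes "\<forall>n. 1 \<le> r n" "\<forall>\<^sub>F n in sequentially. 0 < p n"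
    and "\<forall>\<^sub>F n in sequentially. 12 * p n * real (r n) * real n \<le> ln (real n)"
  shows "\<forall>\<^sub>F n in sequentially. p n \<le> 1 / 2"
proof -
  have "\<forall>\<^sub>F n::nat in sequentially. ln (real n) / (12 * real n) \<le> 1 / 2" by real_asymp
  then show ?thesis using assms(2,3) eventually_gt_at_top[of 0]
  proof eventually_elim
    case (elim n)
    have "12 * p n * real n * 1 \<le> 12 * p n * real n * real (r n)"
      using elim assms(1) by (intro mult_left_mono) auto
    then have "12 * p n * real n \<le> ln (real n)" using elim(3) by (simp add: algebra_simps)
    then have "p n \<le> ln (real n) / (12 * real n)" using elim by (simp add: field_simps)
    then show ?case using elim by linarith
  qed
qed

lemma expected_path_count_ratio_tendsto:
  fixes r :: "nat \<Rightarrow> nat" and p :: "nat \<Rightarrow> real"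
  assumes r: "\<forall>n. 1 \<le> r n" and rn: "\<forall>\<^sub>F n in sequentially. real (r n) \<le> ln (real n)"
    and prn: "\<forall>\<^sub>F n in sequentially. 12 * p n * real (r n) * real n \<le> ln (real n)"
    and x: "filterlim (\<lambda>n. p n * real n powr ((2 * real (r n) + 1) / (2 * real (r n)))) at_top sequentially"
  shows "filterlim (\<lambda>n. measure_pmf.expectation (Gnp n (p n)) (path_count n (2 * r n + 1))
    / real (2 * r n + 1)) at_top sequentially"
proof -
  define x where "x n = p n * real n powr ((2 * real (r n) + 1) / (2 * real (r n)))" for n
  define G where "G n = min (ln (x n) - 3) (ln (real n) / 2 - ln (3 * ln (real n)))
    - 18 * (ln (real n))\<^sup>2 / real n" for n
  have lnx: "filterlim (\<lambda>n. ln (x n)) at_top sequentially"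
    using filterlim_compose[OF ln_at_top x] by (simp add: x_def)
  have exp_G: "filterlim (\<lambda>n. exp (G n)) at_top sequentially"
    unfolding G_def by (rule filterlim_compose[OF exp_at_top first_moment_exponent_tendsto[OF lnx]])
  have p: "\<forall>\<^sub>F n in sequentially. 0 < p n"
    using x by (rule eventually_pos_if_mult_powr_at_top)
  have "\<forall>\<^sub>F n::nat in sequentially. 4 * ln (real n) + 2 \<le> real n" by real_asymp
  then have kn: "\<forall>\<^sub>F n in sequentially. 2 * (2 * r n + 1) \<le> n"
    using rn
  proof eventually_elim
    case (elim n)
    then have "real (2 * (2 * r n + 1)) \<le> real n" by simp
    then show ?case by (simp only: of_nat_le_iff)
  qed
  have x6: "\<forall>\<^sub>F n in sequentially. 6 \<le> ln (x n)" using lnx by (simp add: filterlim_at_top)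
  have "\<forall>\<^sub>F n in sequentially. exp (G n)
      \<le> measure_pmf.expectation (Gnp n (p n)) (path_count n (2 * r n + 1)) / real (2 * r n + 1)"
    using p eventually_le_half_if_mult_le_ln[OF r p prn] prn rn kn x6
  proof eventually_elim
    case (elim n)
    show ?case
      unfolding G_def x_def by (rule expected_path_count_ratio_ge) (use elim r in \<open>simp_all add: x_def\<close>)
  qed
  then show ?thesis by (rule filterlim_at_top_mono[OF exp_G])
qed

lemma tendsto_one_if_gap_le:
  fixes P g :: "'a \<Rightarrow> real"
  assumes "\<forall>\<^sub>F n in F. P n \<le> 1" "\<forall>\<^sub>F n in F. 1 - P n \<le> g n" "(g \<longlongrightarrow> 0) F"
  shows "(P \<longlongrightarrow> 1) F"
proof -
  have "\<forall>\<^sub>F n in F. 0 \<le> 1 - P n" using assms(1) by eventually_elim simp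
  then have "((\<lambda>n. 1 - P n) \<longlongrightarrow> 0) F"
    by (rule tendsto_sandwich[OF _ assms(2) tendsto_const assms(3)])
  from tendsto_diff[OF tendsto_const this] have "((\<lambda>n. 1 - (1 - P n)) \<longlongrightarrow> 1 - 0) F" .
  then show ?thesis by simp
qed

lemma two_path_components_whp:
  fixes r :: "nat \<Rightarrow> nat" and p :: "nat \<Rightarrow> real"
  assumes r: "\<forall>n. 1 \<le> r n" and rn: "\<forall>\<^sub>F n in sequentially. real (r n) \<le> ln (real n)"
    and prn: "\<forall>\<^sub>F n in sequentially. 12 * p n * real (r n) * real n \<le> ln (real n)"
    and x: "filterlim (\<lambda>n. p n * real n powr ((2 * real (r n) + 1) / (2 * real (r n)))) at_top sequentially"
  shows "(\<lambda>n. measure_pmf.prob (Gnp n (p n))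
      {E. \<exists>C1 C2. C1 \<noteq> C2 \<and> path_component n E (2 * r n + 1) C1 \<and> path_component n E (2 * r n + 1) C2})
    \<longlonglongrightarrow> 1"
proof -
  define k where "k n = 2 * r n + 1" for n
  define \<mu> where "\<mu> n = measure_pmf.expectation (Gnp n (p n)) (path_count n (k n))" for n
  define P where "P = (\<lambda>n. measure_pmf.prob (Gnp n (p n))
      {E. \<exists>C1 C2. C1 \<noteq> C2 \<and> path_component n E (k n) C1 \<and> path_component n E (k n) C2})"
  have ratio: "filterlim (\<lambda>n. \<mu> n / real (k n)) at_top sequentially"
    unfolding \<mu>_def k_def by (rule expected_path_count_ratio_tendsto[OF r rn prn x])
  have p: "\<forall>\<^sub>F n in sequentially. 0 \<le> p n"
    using eventually_pos_if_mult_powr_at_top[OF x] by eventually_elim simp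
  have sq: "(\<lambda>n. real (k n * k n) * p n) \<longlonglongrightarrow> 0"
    unfolding k_def by (rule path_length_sq_mult_tendsto_0[OF r rn p prn])
  have "\<forall>\<^sub>F n in sequentially. real (k n * k n) * p n < 1 / 2"
    using order_tendstoD(2)[OF sq, of "1 / 2"] by simp
  then have gap: "\<forall>\<^sub>F n in sequentially. 1 - P n \<le> 4 * real (k n) / \<mu> n + 8 * (real (k n * k n) * p n)"
    using p ratio[unfolded filterlim_at_top, rule_format, of 2]
  proof eventually_elim
    case (elim n)
    have "1 \<le> k n" by (simp add: k_def)
    then have "2 * real (k n) \<le> \<mu> n" using elim(3) by (simp add: pos_le_divide_eq)
    then show ?case
      unfolding \<mu>_def P_def
      by (intro prob_two_path_components_ge \<open>1 \<le> k n\<close> elim(2) less_imp_le[OF elim(1)])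
  qed
  have "(\<lambda>n. real (k n) / \<mu> n) \<longlonglongrightarrow> 0"
    using tendsto_inverse_0_at_top[OF ratio] by simp
  then have "(\<lambda>n. 4 * (real (k n) / \<mu> n) + 8 * (real (k n * k n) * p n)) \<longlonglongrightarrow> 4 * 0 + 8 * 0"
    using sq by (intro tendsto_add tendsto_mult tendsto_const)
  then have lim: "(\<lambda>n. 4 * real (k n) / \<mu> n + 8 * (real (k n * k n) * p n)) \<longlonglongrightarrow> 0" by simp
  have "\<forall>\<^sub>F n in sequentially. P n \<le> 1"
    unfolding P_def by (intro always_eventually allI measure_pmf.prob_le_1)
  then have "P \<longlonglongrightarrow> 1" by (rule tendsto_one_if_gap_le[OF _ gap lim])
  then show ?thesis unfolding P_def k_def .
qed

theorem mainTheorem9: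
  shows "\<exists>\<alpha>::real. \<alpha> > 0 \<and>
    (\<forall>(r :: nat \<Rightarrow> nat) (p :: nat \<Rightarrow> real).
       (\<forall>n. 1 \<le> r n) \<longrightarrow>
       (\<lambda>n. real (r n)) \<in> o(\<lambda>n. ln (real n)) \<longrightarrow>
       filterlim (\<lambda>n. p n * real n powr ((2 * real (r n) + 1) / (2 * real (r n)))) at_top sequentially \<longrightarrow>
       (\<forall>\<^sub>F n in sequentially. p n \<le> \<alpha> * ln (real n) / (real (r n) * real n)) \<longrightarrow>
       ((\<lambda>n. measure_pmf.prob (Gnp n (p n))
            {E. \<exists>C1 C2. C1 \<noteq> C2 \<and> path_component n E (2 * r n + 1) C1
                                   \<and> path_component n E (2 * r n + 1) C2})
         \<longlonglongrightarrow> 1))"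
proof (intro exI[of _ "1 / 12"] conjI allI impI)
  fix r :: "nat \<Rightarrow> nat" and p :: "nat \<Rightarrow> real"
  assume r: "\<forall>n. 1 \<le> r n" and small: "(\<lambda>n. real (r n)) \<in> o(\<lambda>n. ln (real n))"
    and x: "filterlim (\<lambda>n. p n * real n powr ((2 * real (r n) + 1) / (2 * real (r n)))) at_top sequentially"
    and p: "\<forall>\<^sub>F n in sequentially. p n \<le> 1 / 12 * ln (real n) / (real (r n) * real n)"
  have "\<forall>\<^sub>F n in sequentially. real (r n) \<le> ln (real n)"
    using landau_o.smallD[OF small zero_less_one] eventually_gt_at_top[of 0] by eventually_elim simp
  moreover have "\<forall>\<^sub>F n in sequentially. 12 * p n * real (r n) * real n \<le> ln (real n)"
    using p eventually_gt_at_top[of 0] by eventually_elim (use r in \<open>auto simp: field_simps Suc_le_eq\<close>)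
  ultimately show "(\<lambda>n. measure_pmf.prob (Gnp n (p n))
      {E. \<exists>C1 C2. C1 \<noteq> C2 \<and> path_component n E (2 * r n + 1) C1 \<and> path_component n E (2 * r n + 1) C2})
    \<longlonglongrightarrow> 1"
    using two_path_components_whp[OF r _ _ x] by blast
qed simp

end
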